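(* Let $f(X)=X^4+2$. Assume that $|S^2(f,T)|=o(T)$ as $T\to\infty$. Then the set of $d\in\mathbb{N}$ such that $f(d)$ is square-free has a natural density, this density is positive, and it equals $\prod_p\left(1-\frac{\delta_f(p^2)}{p^2}\right)$, where $\delta_f(N)=|\{a\bmod N: f(a)\equiv 0\pmod N\}|$.
   Context: For a natural number $n$, $R_f(n):=\min\{|d|: d\in\mathbb{Z},\ n\mid f(d)\}$ if such $d$ exists, and $R_f(n)=\infty$ otherwise. For real $T$, $S^2(f,T):=\{p \text{ prime}: R_f(p^2)\le T\}$. *)

theory Defs
  imports Complex_Main "HOL-Library.Landau_Symbols" "HOL-Library.Extended_Real"
    "HOL-Computational_Algebra.Primes" "HOL-Computational_Algebra.Squarefree"
begin

definition fpoly :: "int \<Rightarrow> int" where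
  "fpoly x = x ^ 4 + 2"

text \<open>R_f(n) = min { |d| : d integer, n divides f(d) }, and infinity if no such d
  (the infimum of the empty set in ereal is infinity).\<close>
definition R_f :: "(int \<Rightarrow> int) \<Rightarrow> nat \<Rightarrow> ereal" where
  "R_f f n = (INF d \<in> {d::int. int n dvd f d}. ereal (real_of_int \<bar>d\<bar>))"

definition S2 :: "(int \<Rightarrow> int) \<Rightarrow> real \<Rightarrow> nat set" where
  "S2 f T = {p. prime p \<and> R_f f (p ^ 2) \<le> ereal T}"

definition delta_f :: "(int \<Rightarrow> int) \<Rightarrow> nat \<Rightarrow> nat" where
  "delta_f f N = card {a::int. 0 \<le> a \<and> a < int N \<and> int N dvd f a}"

end

theory Submission
  imports Defs "HOL-Analysis.Infinite_Products" "HOL-Number_Theory.Cong"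
begin

text \<open>Sieve by the squares of the primes \<open>p \<le> x\<close>. By the Chinese remainder theorem the
  \<open>d\<close> for which no such \<open>p\<^sup>2\<close> divides \<open>f d\<close> form a periodic set whose density is the product of
  \<open>1 - \<delta>\<^sub>f(p\<^sup>2)/p\<^sup>2\<close> over the primes \<open>p \<le> x\<close>; it decreases to a positive limit since
  \<open>\<delta>\<^sub>f(p\<^sup>2) \<le> 4\<close> and no factor vanishes. A sieved \<open>d \<le> N\<close> with \<open>f d\<close> not squarefree has
  \<open>p\<^sup>2 dvd f d\<close> for a prime \<open>p > x\<close> in \<open>S\<^sup>2(f,N)\<close>, and such a \<open>p\<close> accounts for at most
  \<open>4N/p\<^sup>2 + 5\<close> values of \<open>d\<close>. The terms \<open>4N/p\<^sup>2\<close> sum to \<open>O(N/x)\<close> and the constants to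
  \<open>O(|S\<^sup>2(f,N)|) = o(N)\<close>, so the squarefree values have the limit of the Euler product as density.

  For \<open>X\<^sup>4 + 2\<close>, a root \<open>a\<close> modulo \<open>p\<^sup>2\<close> makes \<open>a\<^sup>2\<close> one of at most two square roots of
  \<open>-2\<close>, each of which has at most two square roots; modulo \<open>4\<close> there are no roots.\<close>

section \<open>Counting in residue classes\<close>

lemma card_periodic_multiple:
  fixes G :: "nat \<Rightarrow> bool"
  assumes periodic: "\<And>d. G (d + M) = G d"
  shows "card {d \<in> {..<k * M}. G d} = k * card {d \<in> {..<M}. G d}"
proof (induction k)
  case 0
  show ?case by simp
next
  case (Suc k)
  have split: "{d \<in> {..<Suc k * M}. G d} = {d \<in> {..<M}. G d} \<union> (\<lambda>d. d + M) ` {d \<in> {..<k * M}. G d}"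
  proof (intro set_eqI iffI)
    fix d assume "d \<in> {d \<in> {..<Suc k * M}. G d}"
    then show "d \<in> {d \<in> {..<M}. G d} \<union> (\<lambda>d. d + M) ` {d \<in> {..<k * M}. G d}"
      using periodic[of "d - M"] by (cases "d < M") (auto intro!: image_eqI[of d _ "d - M"])
  qed (use periodic in auto)
  have "card {d \<in> {..<Suc k * M}. G d} = card {d \<in> {..<M}. G d} + card {d \<in> {..<k * M}. G d}"
    unfolding split by (subst card_Un_disjoint) (auto simp: card_image)
  then show ?case using Suc by simp
qed

lemma card_periodic_approx:
  fixes G :: "nat \<Rightarrow> bool"
  assumes periodic: "\<And>d. G (d + M) = G d" and "0 < M"
  shows "\<bar>real (card {d \<in> {1..N}. G d}) - real N / real M * real (card {d \<in> {..<M}. G d})\<bar>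
           \<le> real (card {d \<in> {..<M}. G d}) + 1"
proof -
  define c where "c = card {d \<in> {..<M}. G d}"
  define k where "k = N div M"
  have "k * M \<le> N" "N < (k + 1) * M"
    using \<open>0 < M\<close> unfolding k_def by (auto simp: dividend_less_div_times)
  then have k_le: "real k \<le> real N / real M" and k_gt: "real N / real M \<le> real k + 1"
    using \<open>0 < M\<close> by (auto simp: field_simps simp flip: of_nat_mult of_nat_add intro: less_imp_le)
  have "k * c \<le> card {d \<in> {..<N}. G d}"
    unfolding c_def card_periodic_multiple[of G M, OF periodic, symmetric]
    using \<open>k * M \<le> N\<close> by (intro card_mono) auto
  also have "\<dots> \<le> card (insert 0 {d \<in> {1..N}. G d})"
    by (intro card_mono) auto
  also have "\<dots> \<le> card {d \<in> {1..N}. G d} + 1"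
    by (simp add: card_insert_if)
  finally have lower: "real k * c \<le> card {d \<in> {1..N}. G d} + 1"
    by (simp flip: of_nat_mult of_nat_Suc)
  have "card {d \<in> {..<N}. G d} \<le> (k + 1) * c"
    unfolding c_def card_periodic_multiple[of G M, OF periodic, symmetric]
    using \<open>N < (k + 1) * M\<close> by (intro card_mono) auto
  have "card {d \<in> {1..N}. G d} \<le> card (insert N {d \<in> {..<N}. G d})"
    by (intro card_mono) auto
  also have "\<dots> \<le> (k + 1) * c + 1"
    using \<open>card {d \<in> {..<N}. G d} \<le> (k + 1) * c\<close> by (simp add: card_insert_if)
  finally have upper: "real (card {d \<in> {1..N}. G d}) \<le> real ((k + 1) * c + 1)"
    by (simp only: of_nat_le_iff)
  have "real k * c \<le> real N / real M * c"
    using k_le by (intro mult_right_mono) simp_all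
  moreover have "real N / real M * c \<le> (real k + 1) * c"
    using k_gt by (intro mult_right_mono) simp_all
  ultimately show ?thesis
    using lower upper unfolding c_def[symmetric] by (simp add: abs_le_iff algebra_simps)
qed

lemma bij_betw_mod_pair:
  fixes m n :: nat
  assumes "coprime m n"
  shows "bij_betw (\<lambda>d. (d mod m, d mod n)) {..<m * n} ({..<m} \<times> {..<n})"
proof (cases "m = 0 \<or> n = 0")
  case True
  then show ?thesis by (auto simp: bij_betw_def)
next
  case False
  have inj: "inj_on (\<lambda>d. (d mod m, d mod n)) {..<m * n}"
  proof (rule inj_onI)
    fix a b assume "a \<in> {..<m * n}" "b \<in> {..<m * n}" and "(a mod m, a mod n) = (b mod m, b mod n)"
    then have "a mod (m * n) = b mod (m * n)"
      using coprime_cong_mult_nat[OF _ _ assms, of a b] by (simp add: cong_def)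
    with \<open>a \<in> {..<m * n}\<close> \<open>b \<in> {..<m * n}\<close> show "a = b" by simp
  qed
  moreover have "(\<lambda>d. (d mod m, d mod n)) ` {..<m * n} = {..<m} \<times> {..<n}"
  proof (rule card_subset_eq)
    show "(\<lambda>d. (d mod m, d mod n)) ` {..<m * n} \<subseteq> {..<m} \<times> {..<n}"
      using False by auto
    show "card ((\<lambda>d. (d mod m, d mod n)) ` {..<m * n}) = card ({..<m} \<times> {..<n})"
      using card_image[OF inj] by (simp add: card_cartesian_product)
  qed simp
  ultimately show ?thesis by (simp add: bij_betw_def)
qed

lemma card_coprime_periods:
  fixes m n :: nat and G H :: "nat \<Rightarrow> bool"
  assumes "coprime m n" and "\<And>d. G (d mod m) = G d" and "\<And>d. H (d mod n) = H d"
  shows "card {d \<in> {..<m * n}. G d \<and> H d} = card {d \<in> {..<m}. G d} * card {d \<in> {..<n}. H d}"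
proof -
  have "bij_betw (\<lambda>d. (d mod m, d mod n)) {d \<in> {..<m * n}. G d \<and> H d}
          {y \<in> {..<m} \<times> {..<n}. G (fst y) \<and> H (snd y)}"
    by (rule bij_betw_Collect[OF bij_betw_mod_pair[OF assms(1)]]) (simp add: assms(2,3))
  then have "card {d \<in> {..<m * n}. G d \<and> H d} = card {y \<in> {..<m} \<times> {..<n}. G (fst y) \<and> H (snd y)}"
    by (rule bij_betw_same_card)
  also have "{y \<in> {..<m} \<times> {..<n}. G (fst y) \<and> H (snd y)} = {d \<in> {..<m}. G d} \<times> {d \<in> {..<n}. H d}"
    by auto
  finally show ?thesis by (simp add: card_cartesian_product)
qed

lemma delta_f_conv_card_nat:
  "delta_f g m = card {d \<in> {..<m}. int m dvd g (int d)}"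
proof -
  have "{a. 0 \<le> a \<and> a < int m \<and> int m dvd g a} = int ` {d \<in> {..<m}. int m dvd g (int d)}"
  proof safe
    fix a assume "0 \<le> a" "a < int m" "int m dvd g a"
    then show "a \<in> int ` {d \<in> {..<m}. int m dvd g (int d)}"
      by (intro image_eqI[of a int "nat a"]) auto
  qed auto
  then show ?thesis unfolding delta_f_def by (simp add: card_image)
qed

lemma sum_inverse_squares_interval:
  fixes a b :: nat
  assumes "0 < a" "a \<le> b"
  shows "(\<Sum>n\<in>{a<..b}. 1 / real n ^ 2) \<le> 1 / real a - 1 / real b"
  using assms(2)
proof (induction b rule: dec_induct)
  case base
  then show ?case by simp
next
  case (step b)
  have "0 < b" using assms step by simp
  have "1 / real (Suc b) ^ 2 \<le> 1 / (real b * real (Suc b))"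
    using \<open>0 < b\<close> by (intro divide_left_mono) (auto simp: power2_eq_square)
  also have "\<dots> = 1 / real b - 1 / real (Suc b)"
    using \<open>0 < b\<close> by (simp add: field_simps)
  finally have "1 / real (Suc b) ^ 2 \<le> 1 / real b - 1 / real (Suc b)" .
  moreover have "{a<..Suc b} = insert (Suc b) {a<..b}" using step by auto
  ultimately show ?case using step by simp
qed

lemma sum_inverse_squares_tail:
  fixes A :: "nat set"
  assumes "finite A" "0 < a" "\<forall>n\<in>A. a < n"
  shows "(\<Sum>n\<in>A. 1 / real n ^ 2) \<le> 1 / real a"
proof -
  define b where "b = Max (insert a A)"
  have "a \<le> b" "A \<subseteq> {a<..b}" unfolding b_def using assms by auto
  then have "(\<Sum>n\<in>A. 1 / real n ^ 2) \<le> (\<Sum>n\<in>{a<..b}. 1 / real n ^ 2)"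
    by (intro sum_mono2) auto
  also have "\<dots> \<le> 1 / real a - 1 / real b"
    by (rule sum_inverse_squares_interval[OF \<open>0 < a\<close> \<open>a \<le> b\<close>])
  also have "\<dots> \<le> 1 / real a"
    by simp
  finally show ?thesis .
qed

lemma LIMSEQ_by_approximants:
  fixes a P b B :: "nat \<Rightarrow> real" and D :: real
  assumes "P \<longlonglongrightarrow> c" and "b \<longlonglongrightarrow> 0"
    and approx: "\<And>x N. 0 < x \<Longrightarrow> 0 < N \<Longrightarrow> \<bar>a N - P x\<bar> \<le> B x / real N + D / real x + D * b N"
  shows "a \<longlonglongrightarrow> c"
proof (rule LIMSEQ_I)
  fix r :: real assume "0 < r"
  then have "0 < r / 4" by simp
  have "eventually (\<lambda>x. \<bar>P x - c\<bar> < r / 4 \<and> D / real x < r / 4 \<and> 0 < x) sequentially"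
    using tendstoD[OF assms(1) \<open>0 < r / 4\<close>] order_tendstoD(2)[OF lim_const_over_n[of D] \<open>0 < r / 4\<close>]
      eventually_gt_at_top[of 0]
    by eventually_elim (auto simp: dist_real_def)
  then obtain x where x: "\<bar>P x - c\<bar> < r / 4" "D / real x < r / 4" "0 < x"
    by (auto simp: eventually_sequentially)
  have Db: "(\<lambda>N. D * b N) \<longlonglongrightarrow> 0"
    using tendsto_mult_right_zero[OF assms(2)] by simp
  have "eventually (\<lambda>N. B x / real N < r / 4 \<and> D * b N < r / 4 \<and> 0 < N) sequentially"
    using order_tendstoD(2)[OF lim_const_over_n[of "B x"] \<open>0 < r / 4\<close>]
      order_tendstoD(2)[OF Db \<open>0 < r / 4\<close>] eventually_gt_at_top[of 0]
    by eventually_elim auto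
  then obtain N0 where N0: "\<And>N. N \<ge> N0 \<Longrightarrow> B x / real N < r / 4 \<and> D * b N < r / 4 \<and> 0 < N"
    by (auto simp: eventually_sequentially)
  show "\<exists>N0. \<forall>N\<ge>N0. norm (a N - c) < r"
  proof (intro exI allI impI)
    fix N assume "N \<ge> N0"
    then have "B x / real N < r / 4" "D * b N < r / 4" "0 < N"
      using N0 by auto
    then show "norm (a N - c) < r"
      using approx[OF \<open>0 < x\<close> \<open>0 < N\<close>] x unfolding real_norm_def by linarith
  qed
qed

section \<open>Square roots modulo odd prime powers\<close>

lemma odd_prime_not_dvd_2:
  fixes p :: nat
  assumes "prime p" "odd p"
  shows "\<not> int p dvd 2"
proof
  assume "int p dvd 2"
  then have "int p = 2"
    using assms(1) by (intro primes_dvd_imp_eq) auto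
  with assms(2) show False by simp
qed

lemma card_square_roots_mod_prime_power:
  fixes p k :: nat and c :: int
  assumes p: "prime p" "odd p" and "0 < k" and "\<not> int p dvd c"
  shows "card {y. 0 \<le> y \<and> y < int p ^ k \<and> int p ^ k dvd y\<^sup>2 - c} \<le> 2"
proof (cases "{y. 0 \<le> y \<and> y < int p ^ k \<and> int p ^ k dvd y\<^sup>2 - c} = {}")
  case True
  then show ?thesis by (simp only: True card.empty)
next
  case False
  define M where "M = int p ^ k"
  from False obtain z where z: "0 \<le> z" "z < M" "M dvd z\<^sup>2 - c"
    unfolding M_def by auto
  have "prime (int p)" using p(1) by simp
  have "y \<in> {z, (- z) mod M}" if y: "0 \<le> y" "y < M" "M dvd y\<^sup>2 - c" for y
  proof -
    have "M dvd (y - z) * (y + z)"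
      using dvd_diff[OF y(3) z(3)] by (simp add: power2_eq_square algebra_simps)
    have "\<not> (int p dvd y - z \<and> int p dvd y + z)"
    proof
      assume "int p dvd y - z \<and> int p dvd y + z"
      then have "int p dvd 2 * y"
        using dvd_add[of "int p" "y - z" "y + z"] by simp
      then have "int p dvd y"
        using odd_prime_not_dvd_2[OF p] \<open>prime (int p)\<close> by (simp add: prime_dvd_mult_iff)
      then have "int p dvd y\<^sup>2"
        by (simp add: power2_eq_square)
      moreover have "int p dvd y\<^sup>2 - c"
        using y(3) \<open>0 < k\<close> unfolding M_def by (meson dvd_power dvd_trans)
      ultimately have "int p dvd y\<^sup>2 - (y\<^sup>2 - c)"
        by (rule dvd_diff)
      with \<open>\<not> int p dvd c\<close> show False by simp
    qed
    then have "coprime (int p) (y - z) \<or> coprime (int p) (y + z)"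
      using prime_imp_coprime[OF \<open>prime (int p)\<close>] by blast
    then have "coprime M (y - z) \<or> coprime M (y + z)"
      unfolding M_def by auto
    then have "M dvd y + z \<or> M dvd y - z"
      using \<open>M dvd (y - z) * (y + z)\<close> coprime_dvd_mult_right_iff coprime_dvd_mult_left_iff by blast
    then have "y mod M = (- z) mod M \<or> y mod M = z mod M"
      by (simp add: mod_eq_dvd_iff)
    then show ?thesis
      using y z by auto
  qed
  then have "card {y. 0 \<le> y \<and> y < M \<and> M dvd y\<^sup>2 - c} \<le> card {z, (- z) mod M}"
    by (intro card_mono) auto
  also have "\<dots> \<le> 2"
    by (simp add: card_insert_if)
  finally show ?thesis unfolding M_def .
qed

section \<open>Squarefree values of an integer-valued function\<close>

locale squarefree_sieve =
  fixes f :: "int \<Rightarrow> int" and K :: nat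
  assumes f_mod_cong: "\<And>x y m. x mod m = y mod m \<Longrightarrow> f x mod m = f y mod m"
    and f_nonzero: "\<And>x. f x \<noteq> 0"
    and delta_f_le: "\<And>p. prime p \<Longrightarrow> delta_f f (p ^ 2) \<le> K"
    and delta_f_less: "\<And>p. prime p \<Longrightarrow> delta_f f (p ^ 2) < p ^ 2"
begin

lemma dvd_f_mod:
  assumes "m dvd M"
  shows "int m dvd f (int (d mod M)) \<longleftrightarrow> int m dvd f (int d)"
proof -
  have "int (d mod M) mod int m = int d mod int m"
    using assms by (simp flip: of_nat_mod add: mod_mod_cancel)
  then show ?thesis
    by (metis dvd_eq_mod_eq_0 f_mod_cong)
qed

definition sieved :: "nat set \<Rightarrow> nat \<Rightarrow> bool" where
  "sieved S d \<longleftrightarrow> (\<forall>p\<in>S. \<not> int (p ^ 2) dvd f (int d))"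

definition sieve_modulus :: "nat set \<Rightarrow> nat" where
  "sieve_modulus S = (\<Prod>p\<in>S. p ^ 2)"

definition euler_product :: "nat set \<Rightarrow> real" where
  "euler_product S = (\<Prod>p\<in>S. 1 - real (delta_f f (p ^ 2)) / real (p ^ 2))"

lemma sieve_modulus_pos: "\<forall>p\<in>S. prime p \<Longrightarrow> 0 < sieve_modulus S"
  unfolding sieve_modulus_def by (auto intro!: prod_pos simp: prime_gt_0_nat)

lemma sieved_mod:
  assumes "finite S"
  shows "sieved S (d mod sieve_modulus S) = sieved S d"
proof -
  have "int (p ^ 2) dvd f (int (d mod sieve_modulus S)) \<longleftrightarrow> int (p ^ 2) dvd f (int d)" if "p \<in> S" for p
    unfolding sieve_modulus_def by (rule dvd_f_mod) (rule dvd_prodI[OF assms that])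
  then show ?thesis unfolding sieved_def by auto
qed

lemma card_sieved_residues:
  assumes "finite S" "\<forall>p\<in>S. prime p"
  shows "card {d \<in> {..<sieve_modulus S}. sieved S d} = (\<Prod>p\<in>S. p ^ 2 - delta_f f (p ^ 2))"
  using assms
proof (induction S rule: finite_induct)
  case empty
  then show ?case by (simp add: sieve_modulus_def sieved_def)
next
  case (insert q S)
  have "coprime (q ^ 2) (sieve_modulus S)"
    unfolding sieve_modulus_def
  proof (rule prod_coprime_right)
    fix p assume "p \<in> S"
    then have "coprime q p"
      using insert by (intro primes_coprime) auto
    then show "coprime (q ^ 2) (p ^ 2)" by simp
  qed
  have "card {d \<in> {..<sieve_modulus (insert q S)}. sieved (insert q S) d}
      = card {d \<in> {..<q ^ 2 * sieve_modulus S}. \<not> int (q ^ 2) dvd f (int d) \<and> sieved S d}"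
    using insert by (simp add: sieve_modulus_def sieved_def)
  also have "\<dots> = card {d \<in> {..<q ^ 2}. \<not> int (q ^ 2) dvd f (int d)} * card {d \<in> {..<sieve_modulus S}. sieved S d}"
    by (rule card_coprime_periods[OF \<open>coprime (q ^ 2) (sieve_modulus S)\<close>])
      (simp_all only: dvd_f_mod dvd_refl sieved_mod[OF insert.hyps(1)])
  also have "card {d \<in> {..<q ^ 2}. \<not> int (q ^ 2) dvd f (int d)} = q ^ 2 - delta_f f (q ^ 2)"
  proof -
    have "card {d \<in> {..<q ^ 2}. \<not> int (q ^ 2) dvd f (int d)}
        = card ({..<q ^ 2} - {d \<in> {..<q ^ 2}. int (q ^ 2) dvd f (int d)})"
      by (rule arg_cong[where f = card]) auto
    also have "\<dots> = q ^ 2 - card {d \<in> {..<q ^ 2}. int (q ^ 2) dvd f (int d)}"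
      by (subst card_Diff_subset) auto
    finally show ?thesis
      by (simp only: delta_f_conv_card_nat)
  qed
  finally show ?case using insert by simp
qed

lemma card_sieved_residues_real:
  assumes "finite S" "\<forall>p\<in>S. prime p"
  shows "real (card {d \<in> {..<sieve_modulus S}. sieved S d}) = real (sieve_modulus S) * euler_product S"
proof -
  have "real (card {d \<in> {..<sieve_modulus S}. sieved S d}) = (\<Prod>p\<in>S. real (p ^ 2) - real (delta_f f (p ^ 2)))"
    using card_sieved_residues[OF assms] assms(2) delta_f_less by (simp add: of_nat_diff less_imp_le)
  also have "\<dots> = (\<Prod>p\<in>S. real (p ^ 2) * (1 - real (delta_f f (p ^ 2)) / real (p ^ 2)))"
    using assms(2) by (intro prod.cong) (auto simp: field_simps prime_gt_0_nat)
  also have "\<dots> = real (sieve_modulus S) * euler_product S"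
    unfolding sieve_modulus_def euler_product_def by (simp add: prod.distrib)
  finally show ?thesis .
qed

lemma delta_f_ratio_less_1:
  "prime p \<Longrightarrow> real (delta_f f (p ^ 2)) / real (p ^ 2) < 1"
  using delta_f_less[of p] by (simp add: prime_gt_0_nat)

lemma delta_f_ratio_le:
  "prime p \<Longrightarrow> real (delta_f f (p ^ 2)) / real (p ^ 2) \<le> K / real p ^ 2"
  using delta_f_le[of p] by (simp add: divide_right_mono)

lemma euler_product_pos:
  assumes "\<forall>p\<in>S. prime p"
  shows "0 < euler_product S"
  unfolding euler_product_def
proof (rule prod_pos)
  fix p assume "p \<in> S"
  then show "0 < 1 - real (delta_f f (p ^ 2)) / real (p ^ 2)"
    using assms delta_f_ratio_less_1[of p] by simp
qed

lemma euler_product_le_1: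
  assumes "\<forall>p\<in>S. prime p"
  shows "euler_product S \<le> 1"
  unfolding euler_product_def
proof (rule prod_le_1)
  fix p assume "p \<in> S"
  then show "0 \<le> 1 - real (delta_f f (p ^ 2)) / real (p ^ 2) \<and> 1 - real (delta_f f (p ^ 2)) / real (p ^ 2) \<le> 1"
    using assms delta_f_ratio_less_1[of p] by simp
qed

lemma euler_product_antimono:
  assumes "finite S'" "S \<subseteq> S'" "\<forall>p\<in>S'. prime p"
  shows "euler_product S' \<le> euler_product S"
proof -
  have "euler_product S' = euler_product (S' - S) * euler_product S"
    unfolding euler_product_def by (rule prod.subset_diff[OF assms(2,1)])
  also have "\<dots> \<le> euler_product S"
  proof (rule mult_left_le_one_le)
    show "0 \<le> euler_product S" "0 \<le> euler_product (S' - S)" "euler_product (S' - S) \<le> 1"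
      using assms(2,3) by (auto intro!: less_imp_le euler_product_pos euler_product_le_1)
  qed
  finally show ?thesis .
qed

lemma euler_product_tail:
  assumes "finite S" "\<forall>p\<in>S. prime p \<and> y < p" "0 < y"
  shows "1 - K / real y \<le> euler_product S"
proof -
  have "(\<Sum>p\<in>S. real (delta_f f (p ^ 2)) / real (p ^ 2)) \<le> (\<Sum>p\<in>S. K * (1 / real p ^ 2))"
    using assms(2) delta_f_ratio_le by (intro sum_mono) auto
  also have "\<dots> = K * (\<Sum>p\<in>S. 1 / real p ^ 2)"
    by (simp add: sum_distrib_left)
  also have "\<dots> \<le> K * (1 / real y)"
    using sum_inverse_squares_tail[OF assms(1,3)] assms(2) by (intro mult_left_mono) auto
  finally have "1 - K / real y \<le> 1 - (\<Sum>p\<in>S. real (delta_f f (p ^ 2)) / real (p ^ 2))"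
    by simp
  also have "\<dots> \<le> euler_product S"
    unfolding euler_product_def using assms(2) delta_f_ratio_less_1
    by (intro Weierstrass_prod_ineq) (auto simp: less_imp_le)
  finally show ?thesis .
qed

lemma euler_product_primes_upto_tendsto:
  "\<exists>c>0. (\<lambda>x. euler_product {p. prime p \<and> p \<le> x}) \<longlonglongrightarrow> c"
proof -
  define P where "P x = euler_product {p. prime p \<and> p \<le> x}" for x
  have "decseq P"
    unfolding P_def by (intro decseq_SucI euler_product_antimono) auto
  then obtain c where "P \<longlonglongrightarrow> c"
    using decseq_convergent[of P 0] euler_product_pos unfolding P_def by (force simp: less_imp_le)
  define y where "y = K + 1"
  have "P y * (1 - K / real y) \<le> P x" if "y \<le> x" for x
  proof -
    have "P x = euler_product ({p. prime p \<and> p \<le> x} - {p. prime p \<and> p \<le> y}) * P y"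
      unfolding P_def euler_product_def using that by (intro prod.subset_diff) auto
    moreover have "1 - K / real y \<le> euler_product ({p. prime p \<and> p \<le> x} - {p. prime p \<and> p \<le> y})"
      unfolding y_def by (intro euler_product_tail) auto
    moreover have "0 < P y"
      unfolding P_def by (intro euler_product_pos) auto
    ultimately show ?thesis
      by (simp add: mult.commute)
  qed
  then have "P y * (1 - K / real y) \<le> c"
    by (intro LIMSEQ_le_const[OF \<open>P \<longlonglongrightarrow> c\<close>]) auto
  moreover have "0 < P y * (1 - K / real y)"
    unfolding P_def y_def by (intro mult_pos_pos euler_product_pos) auto
  ultimately have "0 < c" by linarith
  with \<open>P \<longlonglongrightarrow> c\<close> show ?thesis unfolding P_def by blast
qed

lemma squarefree_imp_sieved:
  assumes "squarefree (f (int d))" "\<forall>p\<in>S. prime p"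
  shows "sieved S d"
  unfolding sieved_def
proof safe
  fix p assume "p \<in> S" "int (p ^ 2) dvd f (int d)"
  then have "prime (int p)" "int p ^ 2 dvd f (int d)"
    using assms(2) by auto
  then show False
    using assms(1) squarefree_factorial_semiring[OF f_nonzero] by blast
qed

lemma sieved_not_squarefree_imp_large_prime:
  assumes "sieved {p. prime p \<and> p \<le> x} d" "\<not> squarefree (f (int d))"
  obtains p where "prime p" "x < p" "int (p ^ 2) dvd f (int d)"
proof -
  obtain q :: int where q: "prime q" "q ^ 2 dvd f (int d)"
    using assms(2) f_nonzero[of "int d"] by (auto simp: squarefree_factorial_semiring)
  define p where "p = nat q"
  have "q = int p"
    using prime_gt_0_int[OF q(1)] unfolding p_def by simp
  then have p: "prime p" "int (p ^ 2) dvd f (int d)"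
    using q by auto
  moreover have "x < p"
  proof (rule ccontr)
    assume "\<not> x < p"
    with assms(1) p show False unfolding sieved_def by auto
  qed
  ultimately show thesis using that by blast
qed

lemma card_multiples_le:
  assumes "prime p"
  shows "real (card {d \<in> {1..N}. int (p ^ 2) dvd f (int d)}) \<le> real N / real (p ^ 2) * K + K + 1"
proof -
  let ?G = "\<lambda>d. int (p ^ 2) dvd f (int d)"
  have periodic: "?G (d + p ^ 2) = ?G d" for d
    using dvd_f_mod[of "p ^ 2" "p ^ 2" "d + p ^ 2"] dvd_f_mod[of "p ^ 2" "p ^ 2" d] by simp
  have "card {d \<in> {..<p ^ 2}. ?G d} \<le> K"
    using delta_f_le[OF assms] by (simp only: delta_f_conv_card_nat)
  then have "real N / real (p ^ 2) * card {d \<in> {..<p ^ 2}. ?G d} \<le> real N / real (p ^ 2) * K"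
    by (intro mult_left_mono) simp_all
  moreover have "\<bar>real (card {d \<in> {1..N}. ?G d}) - real N / real (p ^ 2) * card {d \<in> {..<p ^ 2}. ?G d}\<bar>
      \<le> card {d \<in> {..<p ^ 2}. ?G d} + 1"
    using card_periodic_approx[of ?G "p ^ 2" N] periodic assms by (simp add: prime_gt_0_nat)
  ultimately show ?thesis
    using \<open>card {d \<in> {..<p ^ 2}. ?G d} \<le> K\<close> by (simp add: abs_le_iff)
qed

lemma mem_S2:
  assumes "prime p" "int (p ^ 2) dvd f (int d)" "real d \<le> T"
  shows "p \<in> S2 f T"
proof -
  have "R_f f (p ^ 2) \<le> ereal (real_of_int \<bar>int d\<bar>)"
    unfolding R_f_def by (rule INF_lower) (use assms(2) in simp)
  also have "\<dots> \<le> ereal T"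
    using assms(3) by simp
  finally show ?thesis
    unfolding S2_def using assms(1) by simp
qed

lemma finite_S2: "finite (S2 f T)"
proof -
  define B where "B = \<lceil>T\<rceil>"
  have "S2 f T \<subseteq> (\<Union>d\<in>{-B..B}. {..nat \<bar>f d\<bar>})"
  proof
    fix p assume "p \<in> S2 f T"
    then have "R_f f (p ^ 2) < ereal (T + 1)"
      unfolding S2_def by (auto intro: le_less_trans)
    then obtain d where d: "int (p ^ 2) dvd f d" "real_of_int \<bar>d\<bar> < T + 1"
      unfolding R_f_def INF_less_iff by auto
    then have "\<bar>d\<bar> \<le> B"
      unfolding B_def by linarith
    have "p \<le> p ^ 2"
      by (simp add: power2_eq_square le_square)
    then have "int p \<le> int (p ^ 2)"
      by (simp only: of_nat_le_iff)
    also have "\<dots> \<le> \<bar>f d\<bar>"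
      using dvd_imp_le_int[OF f_nonzero d(1)] by simp
    finally have "p \<le> nat \<bar>f d\<bar>"
      by simp
    with \<open>\<bar>d\<bar> \<le> B\<close> show "p \<in> (\<Union>d\<in>{-B..B}. {..nat \<bar>f d\<bar>})"
      by (auto simp: abs_le_iff intro!: bexI[of _ d])
  qed
  then show ?thesis
    by (rule finite_subset) auto
qed

lemma sum_card_multiples_le:
  assumes "finite T" "\<forall>p\<in>T. prime p \<and> x < p" "0 < x"
  shows "(\<Sum>p\<in>T. real (card {d \<in> {1..N}. int (p ^ 2) dvd f (int d)}))
    \<le> K * real N / real x + (K + 1) * real (card T)"
proof -
  have "(\<Sum>p\<in>T. real (card {d \<in> {1..N}. int (p ^ 2) dvd f (int d)}))
      \<le> (\<Sum>p\<in>T. K * real N * (1 / real p ^ 2) + (K + 1))"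
  proof (rule sum_mono)
    fix p assume "p \<in> T"
    then have "real (card {d \<in> {1..N}. int (p ^ 2) dvd f (int d)}) \<le> real N / real (p ^ 2) * K + K + 1"
      using assms(2) by (intro card_multiples_le) simp
    then show "real (card {d \<in> {1..N}. int (p ^ 2) dvd f (int d)}) \<le> K * real N * (1 / real p ^ 2) + (K + 1)"
      by (simp add: algebra_simps)
  qed
  also have "\<dots> = K * real N * (\<Sum>p\<in>T. 1 / real p ^ 2) + (K + 1) * real (card T)"
    by (simp add: sum.distrib sum_distrib_left)
  also have "\<dots> \<le> K * real N / real x + (K + 1) * real (card T)"
    using mult_left_mono[OF sum_inverse_squares_tail[OF assms(1,3)], of "K * real N"] assms(2)
    by simp
  finally show ?thesis .
qed

text \<open>A sieved \<open>d \<le> N\<close> with \<open>f d\<close> not squarefree is divisible by \<open>p\<^sup>2\<close> for a prime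
  \<open>p > x\<close>, and every such \<open>p\<close> lies in \<open>S2 f N\<close>.\<close>
lemma card_sieved_le_card_squarefree:
  assumes "0 < x"
  shows "real (card {d \<in> {1..N}. sieved {p. prime p \<and> p \<le> x} d})
    \<le> real (card {d \<in> {1..N}. squarefree (f (int d))}) + K * real N / real x + (K + 1) * real (card (S2 f (real N)))"
proof -
  define E where "E p = {d \<in> {1..N}. int (p ^ 2) dvd f (int d)}" for p
  define T where "T = {p. prime p \<and> x < p \<and> E p \<noteq> {}}"
  have "T \<subseteq> S2 f (real N)"
    unfolding T_def E_def by (auto intro: mem_S2)
  then have "finite T" "card T \<le> card (S2 f (real N))"
    using finite_S2 by (auto intro: finite_subset card_mono)
  have "{d \<in> {1..N}. sieved {p. prime p \<and> p \<le> x} d} \<subseteq> {d \<in> {1..N}. squarefree (f (int d))} \<union> (\<Union>p\<in>T. E p)"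
  proof
    fix d assume d: "d \<in> {d \<in> {1..N}. sieved {p. prime p \<and> p \<le> x} d}"
    show "d \<in> {d \<in> {1..N}. squarefree (f (int d))} \<union> (\<Union>p\<in>T. E p)"
    proof (cases "squarefree (f (int d))")
      case False
      with d obtain p where "prime p" "x < p" "int (p ^ 2) dvd f (int d)"
        using sieved_not_squarefree_imp_large_prime by blast
      with d show ?thesis
        unfolding T_def E_def by blast
    qed (use d in simp)
  qed
  then have "card {d \<in> {1..N}. sieved {p. prime p \<and> p \<le> x} d}
      \<le> card ({d \<in> {1..N}. squarefree (f (int d))} \<union> (\<Union>p\<in>T. E p))"
    by (rule card_mono[rotated]) (auto simp: E_def \<open>finite T\<close>)
  also have "\<dots> \<le> card {d \<in> {1..N}. squarefree (f (int d))} + card (\<Union>p\<in>T. E p)"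
    by (rule card_Un_le)
  also have "\<dots> \<le> card {d \<in> {1..N}. squarefree (f (int d))} + (\<Sum>p\<in>T. card (E p))"
    using card_UN_le[OF \<open>finite T\<close>, of E] by simp
  finally have "real (card {d \<in> {1..N}. sieved {p. prime p \<and> p \<le> x} d})
      \<le> real (card {d \<in> {1..N}. squarefree (f (int d))}) + (\<Sum>p\<in>T. real (card (E p)))"
    by (simp flip: of_nat_sum of_nat_add)
  moreover have "(\<Sum>p\<in>T. real (card (E p))) \<le> K * real N / real x + (K + 1) * real (card T)"
    unfolding E_def using \<open>finite T\<close> assms by (intro sum_card_multiples_le) (auto simp: T_def)
  moreover have "(K + 1) * real (card T) \<le> (K + 1) * real (card (S2 f (real N)))"
    using \<open>card T \<le> card (S2 f (real N))\<close> by (intro mult_left_mono) auto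
  ultimately show ?thesis
    by linarith
qed

lemma squarefree_density_approx:
  assumes "0 < x" "0 < N"
  defines "S \<equiv> {p. prime p \<and> p \<le> x}"
  defines "c \<equiv> card {d \<in> {..<sieve_modulus S}. sieved S d}"
  shows "\<bar>real (card {d \<in> {1..N}. squarefree (f (int d))}) / real N - euler_product S\<bar>
    \<le> (real c + 1) / real N + (K + 1) / real x + (K + 1) * (real (card (S2 f (real N))) / real N)"
proof -
  define A where "A = real (card {d \<in> {1..N}. squarefree (f (int d))})"
  define B where "B = real (card {d \<in> {1..N}. sieved S d})"
  have "finite S" "\<forall>p\<in>S. prime p" "0 < sieve_modulus S"
    unfolding S_def by (auto intro: sieve_modulus_pos)
  have "\<bar>B - real N / real (sieve_modulus S) * c\<bar> \<le> real c + 1"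
    unfolding B_def c_def
    by (rule card_periodic_approx[OF _ \<open>0 < sieve_modulus S\<close>])
      (metis sieved_mod[OF \<open>finite S\<close>] mod_add_self2)
  moreover have "real N / real (sieve_modulus S) * c = real N * euler_product S"
    unfolding c_def card_sieved_residues_real[OF \<open>finite S\<close> \<open>\<forall>p\<in>S. prime p\<close>]
    using \<open>0 < sieve_modulus S\<close> by simp
  moreover have "A \<le> B"
    unfolding A_def B_def using \<open>\<forall>p\<in>S. prime p\<close>
    by (auto intro!: card_mono squarefree_imp_sieved)
  moreover have "B \<le> A + K * real N / real x + (K + 1) * real (card (S2 f (real N)))"
    unfolding A_def B_def S_def by (rule card_sieved_le_card_squarefree[OF \<open>0 < x\<close>])
  moreover have "K * real N / real x \<le> (K + 1) * real N / real x"
    by (intro divide_right_mono mult_right_mono) auto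
  ultimately have approx: "\<bar>A - real N * euler_product S\<bar> \<le> real c + 1 + (K + 1) * real N / real x + (K + 1) * real (card (S2 f (real N)))"
    by (simp add: abs_le_iff)
  have "\<bar>A / real N - euler_product S\<bar> = \<bar>A - real N * euler_product S\<bar> / real N"
  proof -
    have "A / real N - euler_product S = (A - real N * euler_product S) / real N"
      using \<open>0 < N\<close> by (simp add: field_simps)
    then show ?thesis by simp
  qed
  also have "\<dots> \<le> (real c + 1 + (K + 1) * real N / real x + (K + 1) * real (card (S2 f (real N)))) / real N"
    using approx by (intro divide_right_mono) auto
  also have "\<dots> = (real c + 1) / real N + (K + 1) / real x + (K + 1) * (real (card (S2 f (real N))) / real N)"
    using \<open>0 < N\<close> by (simp add: field_simps)
  finally show ?thesis
    by (simp only: A_def)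
qed

theorem squarefree_density:
  assumes "(\<lambda>T. real (card (S2 f T))) \<in> o(\<lambda>T. T)"
  shows "\<exists>c>0. (\<lambda>N. real (card {d \<in> {1..N}. squarefree (f (int d))}) / real N) \<longlonglongrightarrow> c
           \<and> (\<lambda>x. euler_product {p. prime p \<and> p \<le> x}) \<longlonglongrightarrow> c"
proof -
  obtain c where "0 < c" and euler: "(\<lambda>x. euler_product {p. prime p \<and> p \<le> x}) \<longlonglongrightarrow> c"
    using euler_product_primes_upto_tendsto by blast
  have "((\<lambda>T. real (card (S2 f T)) / T) \<longlongrightarrow> 0) at_top"
    by (rule smalloD_tendsto[OF assms])
  then have S2_density: "(\<lambda>N. real (card (S2 f (real N))) / real N) \<longlonglongrightarrow> 0"
    by (rule filterlim_compose[OF _ filterlim_real_sequentially])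
  have "(\<lambda>N. real (card {d \<in> {1..N}. squarefree (f (int d))}) / real N) \<longlonglongrightarrow> c"
    by (rule LIMSEQ_by_approximants[OF euler S2_density]) (rule squarefree_density_approx)
  with \<open>0 < c\<close> euler show ?thesis by blast
qed

end

section \<open>The polynomial \<open>X\<^sup>4 + 2\<close>\<close>

lemma delta_f_fpoly_odd_prime_power:
  fixes p k :: nat
  assumes p: "prime p" "odd p" and "0 < k"
  shows "delta_f fpoly (p ^ k) \<le> 4"
proof -
  define M where "M = int p ^ k"
  have "0 < M" using p(1) unfolding M_def by (simp add: prime_gt_0_nat)
  define W where "W = {w. 0 \<le> w \<and> w < M \<and> M dvd w\<^sup>2 - (- 2)}"
  define roots where "roots w = {y. 0 \<le> y \<and> y < M \<and> M dvd y\<^sup>2 - w}" for w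
  have "finite W" unfolding W_def by (rule finite_subset[of _ "{0..<M}"]) auto
  have "card W \<le> 2"
    unfolding W_def M_def using odd_prime_not_dvd_2[OF p]
    by (intro card_square_roots_mod_prime_power[OF p \<open>0 < k\<close>]) simp
  have "card (roots w) \<le> 2" if "w \<in> W" for w
  proof -
    have "\<not> int p dvd w"
    proof
      assume "int p dvd w"
      then have "int p dvd w\<^sup>2" by (simp add: power2_eq_square)
      moreover have "int p ^ k dvd w\<^sup>2 + 2"
        using that unfolding W_def M_def by simp
      then have "int p dvd w\<^sup>2 + 2"
        using \<open>0 < k\<close> by (meson dvd_power dvd_trans)
      ultimately show False
        using odd_prime_not_dvd_2[OF p] by (metis add_diff_cancel_left' dvd_diff)
    qed
    then show ?thesis
      unfolding roots_def M_def by (rule card_square_roots_mod_prime_power[OF p \<open>0 < k\<close>])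
  qed
  have "{a. 0 \<le> a \<and> a < M \<and> M dvd fpoly a} \<subseteq> (\<Union>w\<in>W. roots w)"
  proof safe
    fix y assume y: "0 \<le> y" "y < M" "M dvd fpoly y"
    define w where "w = y\<^sup>2 mod M"
    have "(w\<^sup>2 + 2) mod M = ((y\<^sup>2)\<^sup>2 + 2) mod M"
      unfolding w_def by (metis mod_add_left_eq power_mod)
    also have "\<dots> = 0"
      using y(3) by (simp add: fpoly_def power_mult[symmetric])
    finally have "w \<in> W"
      using \<open>0 < M\<close> unfolding W_def w_def by (simp add: dvd_eq_mod_eq_0)
    moreover have "y \<in> roots w"
      using y unfolding roots_def w_def by (simp add: minus_mod_eq_mult_div)
    ultimately show "y \<in> (\<Union>w\<in>W. roots w)" by blast
  qed
  then have "delta_f fpoly (p ^ k) \<le> card (\<Union>w\<in>W. roots w)"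
    unfolding delta_f_def M_def
    by (intro card_mono) (auto simp: roots_def M_def intro!: finite_subset[of _ "{0..<M}"] \<open>finite W\<close>)
  also have "\<dots> \<le> (\<Sum>w\<in>W. card (roots w))"
    by (rule card_UN_le[OF \<open>finite W\<close>])
  also have "\<dots> \<le> (\<Sum>w\<in>W. 2)"
    by (intro sum_mono) fact
  also have "\<dots> \<le> 4"
    using \<open>card W \<le> 2\<close> by simp
  finally show ?thesis .
qed

lemma delta_f_fpoly_4: "delta_f fpoly (2 ^ 2) = 0"
proof -
  have "{a. 0 \<le> a \<and> a < int (2 ^ 2) \<and> int (2 ^ 2) dvd fpoly a} = {}"
  proof safe
    fix a assume "0 \<le> a" "a < int (2 ^ 2)" "int (2 ^ 2) dvd fpoly a"
    then have "a = 0 \<or> a = 1 \<or> a = 2 \<or> a = 3" "4 dvd fpoly a" by auto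
    then show "a \<in> {}" by (auto simp: fpoly_def)
  qed
  then show ?thesis unfolding delta_f_def by (simp only: card.empty)
qed

lemma fpoly_nonzero: "fpoly x \<noteq> 0"
proof -
  have "0 \<le> x ^ 4" by simp
  then show ?thesis unfolding fpoly_def by linarith
qed

lemma delta_f_fpoly_prime_square:
  assumes "prime p"
  shows "delta_f fpoly (p ^ 2) \<le> 4" "delta_f fpoly (p ^ 2) < p ^ 2"
proof -
  show "delta_f fpoly (p ^ 2) \<le> 4"
  proof (cases "p = 2")
    case True
    then show ?thesis using delta_f_fpoly_4 by simp
  next
    case False
    then have "odd p"
      using prime_odd_nat[OF assms] prime_ge_2_nat[OF assms] by simp
    then show ?thesis
      by (rule delta_f_fpoly_odd_prime_power[OF assms]) simp
  qed
  show "delta_f fpoly (p ^ 2) < p ^ 2"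
  proof (cases "p = 2")
    case True
    then show ?thesis using delta_f_fpoly_4 by simp
  next
    case False
    then have "3 \<le> p"
      using prime_ge_2_nat[OF assms] by simp
    then have "3 ^ 2 \<le> p ^ 2"
      by (rule power_mono) simp
    with \<open>delta_f fpoly (p ^ 2) \<le> 4\<close> show ?thesis
      by simp
  qed
qed

interpretation fpoly: squarefree_sieve fpoly 4
proof
  fix x y m :: int
  assume "x mod m = y mod m"
  then show "fpoly x mod m = fpoly y mod m"
    unfolding fpoly_def by (metis mod_add_left_eq power_mod)
qed (simp_all add: fpoly_nonzero delta_f_fpoly_prime_square)

theorem theorem3:
  assumes "(\<lambda>T::real. real (card (S2 fpoly T))) \<in> o(\<lambda>T. T)"
  shows "\<exists>c::real.
     ((\<lambda>N::nat. real (card {d \<in> {1..N}. squarefree (fpoly (int d))}) / real N)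
        \<longlonglongrightarrow> c)
     \<and> c > 0
     \<and> ((\<lambda>x::nat. \<Prod>p\<in>{p. prime p \<and> p \<le> x}.
            1 - real (delta_f fpoly (p ^ 2)) / real (p ^ 2)) \<longlonglongrightarrow> c)"
  using fpoly.squarefree_density[OF assms] unfolding fpoly.euler_product_def by blast

end
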